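(* Let $n\ge1$. Let $X_{2n,2n}$ be the graph with vertices $x_{i,j}$ ($1\le i,j\le 2n$), where $x_{i,j}x_{i',j'}$ is an edge iff $i'=i+1$ and $j\ge j'$. Let $Y_{2n,2n}$ be the graph with vertices $y_{i,j}$ ($1\le i,j\le 2n$) where $y_{i,j}y_{i',j'}$ is an edge iff (1) $i$ odd, $i'=i+1$, $j\ge j'$; or (2) $i$ even, $i'=i+1$, $j<j'$; or (3) $i$ even, $i'$ odd, $i'\ge i+3$; or (4) $i$ odd, $i'=i-1$, $j=1$. Starting from $X_{2n,2n}$, perform successively the pivots on the edges $x_{2n-1,1}x_{2n,1},\ x_{2n-3,1}x_{2n-2,1},\ \dots,\ x_{1,1}x_{2,1}$ (in this order, i.e.\ $n$ pivots on alternate edges of the bottom row, acting from right to left). The resulting graph is (isomorphic to) $Y_{2n,2n}$.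
   Context: For a graph $G=(V,E)$ and $v\in V$, the local complementation $G*v$ is the graph on $V$ with edge set $E\,\triangle\,\{xy: xv,yv\in E,\ x\neq y\}$ (the subgraph induced on the neighbourhood of $v$ is complemented). For an edge $uv$, the pivot of $G$ on $uv$ is $G*u*v*u$; it is known to be symmetric in $u,v$, and its effect is to complement the adjacencies between the three sets $N(u)\cap N(v)$, $N(u)\setminus N(v)$ and $N(v)\setminus N(u)$. In the grids, $i$ is the column index and $j$ the row index, row $1$ being the bottom row. *)

theory Defs
  imports Main
begin

text \<open>Graphs are given by an adjacency predicate (symmetric, irreflexive) on a vertex type.\<close>
type_synonym 'a graph = "'a \<Rightarrow> 'a \<Rightarrow> bool"

definition local_comp :: "'a graph \<Rightarrow> 'a \<Rightarrow> 'a graph" where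
  "local_comp G v = (\<lambda>x y. if x \<noteq> y \<and> G x v \<and> G y v then \<not> G x y else G x y)"

definition pivot :: "'a graph \<Rightarrow> 'a \<Rightarrow> 'a \<Rightarrow> 'a graph" where
  "pivot G u v = local_comp (local_comp (local_comp G u) v) u"

text \<open>Vertex set of the 2n x 2n grid; a vertex (i,j) has column i and row j.\<close>
definition grid :: "nat \<Rightarrow> (nat \<times> nat) set" where
  "grid n = {1..2*n} \<times> {1..2*n}"

definition X_rel :: "nat \<times> nat \<Rightarrow> nat \<times> nat \<Rightarrow> bool" where
  "X_rel p q = (fst q = fst p + 1 \<and> snd p \<ge> snd q)"

definition X_graph :: "nat \<Rightarrow> (nat \<times> nat) graph" where
  "X_graph n p q = (p \<in> grid n \<and> q \<in> grid n \<and> (X_rel p q \<or> X_rel q p))"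

definition Y_rel :: "nat \<times> nat \<Rightarrow> nat \<times> nat \<Rightarrow> bool" where
  "Y_rel p q = (let i = fst p; j = snd p; i' = fst q; j' = snd q in
      (odd i \<and> i' = i + 1 \<and> j \<ge> j') \<or>
      (even i \<and> i' = i + 1 \<and> j < j') \<or>
      (even i \<and> odd i' \<and> i' \<ge> i + 3) \<or>
      (odd i \<and> i' + 1 = i \<and> j = 1))"

definition Y_graph :: "nat \<Rightarrow> (nat \<times> nat) graph" where
  "Y_graph n p q = (p \<in> grid n \<and> q \<in> grid n \<and> (Y_rel p q \<or> Y_rel q p))"

fun pivots :: "nat \<Rightarrow> (nat \<times> nat) graph \<Rightarrow> (nat \<times> nat) graph" where
  "pivots 0 G = G"
| "pivots (Suc k) G = pivots k (pivot G (2*k+1, 1) (2*k+2, 1))"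

definition graph_iso_on :: "'a set \<Rightarrow> 'a graph \<Rightarrow> 'b set \<Rightarrow> 'b graph \<Rightarrow> bool" where
  "graph_iso_on V G W H = (\<exists>f. bij_betw f V W \<and> (\<forall>p\<in>V. \<forall>q\<in>V. G p q = H (f p) (f q)))"

end

theory Submission
  imports Defs
begin

text \<open>Write \<open>u = (2k+1, 1)\<close> and \<open>v = (2k+2, 1)\<close>. Just before the pivot on \<open>uv\<close>,
  once the two ends of every edge already pivoted are relabelled, the graph consists of the
  edges of \<open>X\<close> in the columns up to \<open>2k+2\<close> and of the edges of \<open>Y\<close> beyond. There
  \<open>N(u)\<close> is column \<open>2k\<close> and \<open>N(v)\<close> is the set of vertices in odd (relabelled) columns
  \<open>\<ge> 2k+1\<close>. These neighbourhoods are disjoint, so the pivot complements exactly the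
  adjacencies between column \<open>2k\<close> and \<open>N(v)\<close> and exchanges the neighbourhoods of \<open>u\<close>
  and \<open>v\<close>. Relabelling \<open>u\<close> and \<open>v\<close>, this turns the \<open>X\<close>-edges between columns \<open>2k\<close>
  and \<open>2k+1\<close> into \<open>Y\<close>-edges and adds the long edges from column \<open>2k\<close> to the odd
  columns beyond: the invariant holds with \<open>k\<close> in place of \<open>k+1\<close>. After the last pivot
  the relabelling is the required isomorphism onto \<open>Y\<close>.\<close>

text \<open>The pivot on \<open>uv\<close> toggles \<open>xy\<close> iff \<open>x\<close> and \<open>y\<close> lie in two different ones of the
  sets \<open>N(u) \<inter> N(v)\<close>, \<open>N(u) - N(v)\<close>, \<open>N(v) - N(u)\<close>.\<close>

definition pivot_toggles :: "'a graph \<Rightarrow> 'a \<Rightarrow> 'a \<Rightarrow> 'a \<Rightarrow> 'a \<Rightarrow> bool" where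
  "pivot_toggles G u v x y \<longleftrightarrow>
     (G x u \<and> G y v \<or> G x v \<and> G y u) \<and> \<not> (G x u \<and> G x v \<and> G y u \<and> G y v)"

lemma pivot_eqI:
  assumes "symp G" "irreflp G" "G u v" "symp G'" "irreflp G'" "G' u v"
    and pivot_vertex_u: "\<And>y. y \<notin> {u, v} \<Longrightarrow> G' u y = G v y"
    and pivot_vertex_v: "\<And>y. y \<notin> {u, v} \<Longrightarrow> G' v y = G u y"
    and off_edge: "\<And>x y. x \<notin> {u, v} \<Longrightarrow> y \<notin> {u, v} \<Longrightarrow> x \<noteq> y \<Longrightarrow>
      G' x y = (G x y \<noteq> pivot_toggles G u v x y)"
  shows "pivot G u v = G'"
proof (intro ext)
  fix x y
  have G: "G x y = G y x" "G x u = G u x" "G x v = G v x" "G y u = G u y" "G y v = G v y" "G v u"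
    "G u v" "\<not> G x x" "\<not> G y y" "\<not> G u u" "\<not> G v v"
    using assms(1-3) by (auto simp: symp_def irreflp_def)
  have G': "G' x y = G' y x" "G' v u" "\<not> G' x x"
    using assms(4-6) by (auto simp: symp_def irreflp_def)
  have "pivot G u v x y = (if x = y then False
     else if x = u \<and> y = v \<or> x = v \<and> y = u then True
     else if x = u then G v y else if x = v then G u y
     else if y = u then G x v else if y = v then G x u
     else G x y \<noteq> pivot_toggles G u v x y)"
    unfolding pivot_def local_comp_def pivot_toggles_def using G by (smt (verit))
  also have "\<dots> = G' x y"
    using G G' assms(6) pivot_vertex_u[of x] pivot_vertex_u[of y] pivot_vertex_v[of x] pivot_vertex_v[of y]
      off_edge[of x y] by auto
  finally show "pivot G u v x y = G' x y" .
qed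

fun bottom_swap :: "nat \<Rightarrow> nat \<times> nat \<Rightarrow> nat \<times> nat" where
  "bottom_swap k (i, j) =
     (if j = 1 \<and> 2*k < i then (if odd i then (i + 1, 1) else (i - 1, 1)) else (i, j))"

fun partial_rel :: "nat \<Rightarrow> nat \<times> nat \<Rightarrow> nat \<times> nat \<Rightarrow> bool" where
  "partial_rel k (i, j) (i', j') =
     (if max i i' \<le> 2*k then i' = i + 1 \<and> j' \<le> j
      else (odd i \<and> i' = i + 1 \<and> j' \<le> j) \<or> (even i \<and> i' = i + 1 \<and> j < j') \<or>
        (even i \<and> 2*k \<le> i \<and> odd i' \<and> i + 3 \<le> i') \<or> (odd i \<and> i' + 1 = i \<and> j = 1))"

text \<open>The graph reached after the pivots on the bottom edges of the columns beyond \<open>2k\<close>,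
  read through the relabelling \<open>bottom_swap k\<close> of their ends.\<close>

definition partial_graph :: "nat \<Rightarrow> nat \<Rightarrow> (nat \<times> nat) graph" where
  "partial_graph n k p q \<longleftrightarrow> p \<in> grid n \<and> q \<in> grid n \<and>
     (partial_rel k (bottom_swap k p) (bottom_swap k q) \<or> partial_rel k (bottom_swap k q) (bottom_swap k p))"

lemma bottom_swap_involution: "bottom_swap k (bottom_swap k p) = p"
  by (cases p) auto

lemma bottom_swap_grid: "p \<in> grid n \<Longrightarrow> bottom_swap k p \<in> grid n"
  by (cases p) (auto simp: grid_def; presburger)

lemma bij_betw_bottom_swap: "bij_betw (bottom_swap k) (grid n) (grid n)"
  by (rule bij_betw_byWitness[where f' = "bottom_swap k"])
    (auto simp del: bottom_swap.simps simp: bottom_swap_involution bottom_swap_grid)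

lemma fst_bottom_swap_eq_double_iff: "fst (bottom_swap k p) = 2*k \<longleftrightarrow> fst p = 2*k"
  by (cases p) auto

lemma bottom_swap_Suc:
  "p \<notin> {(2*k+1, 1), (2*k+2, 1)} \<Longrightarrow> bottom_swap (Suc k) p = bottom_swap k p"
  by (cases p) auto

lemma bottom_swap_avoids_pivot_edge:
  "p \<notin> {(2*k+1, 1), (2*k+2, 1)} \<Longrightarrow> bottom_swap k p \<notin> {(2*k+1, 1), (2*k+2, 1)}"
  by (cases p) (auto split: if_splits; presburger)

lemma symp_partial_graph: "symp (partial_graph n k)"
  by (auto simp: symp_def partial_graph_def)

lemma irreflp_partial_graph: "irreflp (partial_graph n k)"
  by (auto simp: irreflp_def partial_graph_def bottom_swap_involution)

lemma partial_graph_eq_X_graph: "partial_graph n n = X_graph n"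
proof (intro ext)
  fix p q :: "nat \<times> nat"
  show "partial_graph n n p q = X_graph n p q"
    by (cases p; cases q) (auto simp: partial_graph_def X_graph_def X_rel_def grid_def)
qed

lemma partial_graph_0_eq_Y_graph:
  assumes "p \<in> grid n" "q \<in> grid n"
  shows "partial_graph n 0 p q = Y_graph n (bottom_swap 0 p) (bottom_swap 0 q)"
proof -
  have "partial_rel 0 P Q = Y_rel P Q" if "P \<in> grid n" "Q \<in> grid n" for P Q
    using that by (cases P; cases Q) (auto simp: Y_rel_def grid_def)
  then show ?thesis
    using assms bottom_swap_grid by (auto simp: partial_graph_def Y_graph_def)
qed

definition odd_beyond :: "nat \<Rightarrow> nat \<times> nat \<Rightarrow> bool" where
  "odd_beyond k p \<longleftrightarrow> odd (fst (bottom_swap k p)) \<and> 2*k + 1 \<le> fst (bottom_swap k p)"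

lemma partial_graph_Suc_left_end:
  assumes "k < n" "y \<notin> {(2*k+1, 1), (2*k+2, 1)}"
  shows "partial_graph n (Suc k) y (2*k+1, 1) \<longleftrightarrow> y \<in> grid n \<and> fst y = 2*k"
  using assms by (cases y) (auto simp: partial_graph_def grid_def split: if_splits; presburger)

lemma partial_graph_Suc_right_end:
  assumes "k < n" "y \<notin> {(2*k+1, 1), (2*k+2, 1)}"
  shows "partial_graph n (Suc k) y (2*k+2, 1) \<longleftrightarrow> y \<in> grid n \<and> odd_beyond k y"
  using assms by (cases y) (auto simp: partial_graph_def odd_beyond_def grid_def split: if_splits; presburger)

lemma partial_graph_left_end:
  assumes "k < n" "y \<notin> {(2*k+1, 1), (2*k+2, 1)}"
  shows "partial_graph n k y (2*k+1, 1) \<longleftrightarrow> y \<in> grid n \<and> odd_beyond k y"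
  using assms by (cases y) (auto simp: partial_graph_def odd_beyond_def grid_def split: if_splits; presburger)

lemma partial_graph_right_end:
  assumes "k < n" "y \<notin> {(2*k+1, 1), (2*k+2, 1)}"
  shows "partial_graph n k y (2*k+2, 1) \<longleftrightarrow> y \<in> grid n \<and> fst y = 2*k"
  using assms by (cases y) (auto simp: partial_graph_def grid_def split: if_splits; presburger)

lemma nat_cases_around:
  fixes a k :: nat
  obtains "a < k" | "a = k" | "a = k + 1" | "k + 1 < a"
  by linarith

lemma partial_rel_Suc_diff:
  assumes "(i, j) \<notin> {(2*k+1, 1), (2*k+2, 1)}" "(i', j') \<notin> {(2*k+1, 1), (2*k+2, 1)}"
  shows "(partial_rel k (i, j) (i', j') \<or> partial_rel k (i', j') (i, j)) \<longleftrightarrow>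
    (partial_rel (Suc k) (i, j) (i', j') \<or> partial_rel (Suc k) (i', j') (i, j)) \<noteq>
    (i = 2*k \<and> odd i' \<and> 2*k + 1 \<le> i' \<or> i' = 2*k \<and> odd i \<and> 2*k + 1 \<le> i)"
proof -
  obtain a b where "i = 2*a \<or> i = 2*a + 1" "i' = 2*b \<or> i' = 2*b + 1"
    by (metis oddE evenE)
  then show ?thesis
    using assms by (elim disjE; cases a k rule: nat_cases_around; cases b k rule: nat_cases_around) auto
qed

lemma pivot_toggles_partial_graph:
  assumes "k < n" "x \<notin> {(2*k+1, 1), (2*k+2, 1)}" "y \<notin> {(2*k+1, 1), (2*k+2, 1)}"
  shows "pivot_toggles (partial_graph n (Suc k)) (2*k+1, 1) (2*k+2, 1) x y \<longleftrightarrow>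
    x \<in> grid n \<and> y \<in> grid n \<and> (fst x = 2*k \<and> odd_beyond k y \<or> fst y = 2*k \<and> odd_beyond k x)"
proof -
  have "\<not> odd_beyond k p" if "fst p = 2*k" for p
    using that fst_bottom_swap_eq_double_iff[of k p] by (simp add: odd_beyond_def)
  then show ?thesis
    unfolding pivot_toggles_def
      partial_graph_Suc_left_end[OF assms(1,2)] partial_graph_Suc_right_end[OF assms(1,2)]
      partial_graph_Suc_left_end[OF assms(1,3)] partial_graph_Suc_right_end[OF assms(1,3)]
    by blast
qed

lemma partial_graph_Suc_toggle:
  assumes "x \<notin> {(2*k+1, 1), (2*k+2, 1)}" "y \<notin> {(2*k+1, 1), (2*k+2, 1)}"
  shows "partial_graph n k x y \<longleftrightarrow> partial_graph n (Suc k) x y \<noteq>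
    (x \<in> grid n \<and> y \<in> grid n \<and> (fst x = 2*k \<and> odd_beyond k y \<or> fst y = 2*k \<and> odd_beyond k x))"
proof -
  obtain i j i' j' where swapped: "bottom_swap k x = (i, j)" "bottom_swap k y = (i', j')"
    by fastforce
  have "(i, j) \<notin> {(2*k+1, 1), (2*k+2, 1)}" "(i', j') \<notin> {(2*k+1, 1), (2*k+2, 1)}"
    using bottom_swap_avoids_pivot_edge assms swapped by metis+
  note diff = partial_rel_Suc_diff[OF this]
  show ?thesis
    using assms diff swapped fst_bottom_swap_eq_double_iff[of k x] fst_bottom_swap_eq_double_iff[of k y]
    by (auto simp del: partial_rel.simps bottom_swap.simps simp: partial_graph_def bottom_swap_Suc odd_beyond_def)
qed

lemma pivot_partial_graph:
  assumes "k < n"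
  shows "pivot (partial_graph n (Suc k)) (2*k+1, 1) (2*k+2, 1) = partial_graph n k"
proof (rule pivot_eqI)
  have "(2*k+1, 1) \<in> grid n" "(2*k+2, 1) \<in> grid n"
    using assms by (auto simp: grid_def)
  then show "partial_graph n (Suc k) (2*k+1, 1) (2*k+2, 1)" "partial_graph n k (2*k+1, 1) (2*k+2, 1)"
    by (auto simp: partial_graph_def)
  show "partial_graph n k (2*k+1, 1) y = partial_graph n (Suc k) (2*k+2, 1) y"
    and "partial_graph n k (2*k+2, 1) y = partial_graph n (Suc k) (2*k+1, 1) y"
    if "y \<notin> {(2*k+1, 1), (2*k+2, 1)}" for y
    using that assms symp_partial_graph[unfolded symp_def]
    by (metis partial_graph_left_end partial_graph_right_end partial_graph_Suc_left_end partial_graph_Suc_right_end)+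
  show "partial_graph n k x y = (partial_graph n (Suc k) x y \<noteq>
      pivot_toggles (partial_graph n (Suc k)) (2*k+1, 1) (2*k+2, 1) x y)"
    if "x \<notin> {(2*k+1, 1), (2*k+2, 1)}" "y \<notin> {(2*k+1, 1), (2*k+2, 1)}" for x y
    using that assms partial_graph_Suc_toggle pivot_toggles_partial_graph by metis
qed (rule symp_partial_graph irreflp_partial_graph)+

lemma pivots_partial_graph: "k \<le> n \<Longrightarrow> pivots k (partial_graph n k) = partial_graph n 0"
proof (induction k)
  case (Suc k)
  then show ?case
    using pivot_partial_graph[of k n] by simp
qed simp

theorem lemma12:
  fixes n :: nat
  assumes "n \<ge> 1"
  shows "graph_iso_on (grid n) (pivots n (X_graph n)) (grid n) (Y_graph n)"
  unfolding graph_iso_on_def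
proof (intro exI conjI ballI)
  show "bij_betw (bottom_swap 0) (grid n) (grid n)"
    by (rule bij_betw_bottom_swap)
  show "pivots n (X_graph n) p q = Y_graph n (bottom_swap 0 p) (bottom_swap 0 q)"
    if "p \<in> grid n" "q \<in> grid n" for p q
    using that by (simp add: partial_graph_eq_X_graph[symmetric] pivots_partial_graph partial_graph_0_eq_Y_graph)
qed

end
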